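(* Consider a sequence of finite populations indexed by $n\to\infty$, each satisfying Assumption 1, Assumption 2 and the null hypothesis $H_0:\ T_i(1)=T_i(0)$ for all $i$, and condition on all potential event times. Then $$\sum_{k=1}^{K-1}\xi_{1k}=(n\log n)^{1/2}\,O_{\Pr}(1),$$ where $\xi_{1k}=\frac{D_k(N_k-D_k)}{N_k^2(N_k-1)}\big[N_{1k}(N_k-N_{1k})-\mathbb{E}\{N_{1k}(N_k-N_{1k})\mid\boldsymbol{T}(1),\boldsymbol{T}(0),N_k\}\big]$.
   Context: Unit $i$ ($1\le i\le n$) has potential event times $T_i(1),T_i(0)\ge 0$ (fixed constants), potential censoring times $C_i(1),C_i(0)\in[0,\infty]$, treatment indicator $Z_i\in\{0,1\}$; bold letters denote $n$-vectors. Assumption 1: conditional on all potential event and censoring times, the $Z_i$ are i.i.d. Bernoulli$(p_1)$, $p_1=1-p_0\in(0,1)$. Assumption 2: $(\boldsymbol{C}(1),\boldsymbol{C}(0))$ is independent of $(\boldsymbol{T}(1),\boldsymbol{T}(0))$ and the pairs $(C_i(1),C_i(0))$ are i.i.d. across $i$. Realized: $W_i=\min\{T_i,C_i\}$, $\Delta_i=\mathbb{1}(T_i\le C_i)$ with $T_i=Z_iT_i(1)+(1-Z_i)T_i(0)$, $C_i=Z_iC_i(1)+(1-Z_i)C_i(0)$. Let $t_1<\dots<t_K$ be the distinct values of $\{T_i(0)\}$; $N_{1k}=\sum_iZ_i\mathbb{1}(W_i\ge t_k)$, $N_k=\sum_i\mathbb{1}(W_i\ge t_k)$, $D_k=\sum_i\Delta_i\mathbb{1}(W_i=t_k)$;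 convention $0/0:=0$. $X_n=a_nO_{\Pr}(1)$ means $X_n/a_n$ is bounded in probability as $n\to\infty$; all quantities may depend on $n$. *)

theory Defs
  imports "HOL-Probability.Probability"
begin

text \<open>Coordinate i is (Z_i, (C_i(1), C_i(0))): the Z_i are i.i.d. Bernoulli(p),
  independent of the censoring pairs, which are i.i.d. with law mu.
  Potential event times are fixed constants (we condition on them).\<close>
definition cpop_space ::
  "real \<Rightarrow> (ennreal \<times> ennreal) measure \<Rightarrow> nat \<Rightarrow> (nat \<Rightarrow> bool \<times> (ennreal \<times> ennreal)) measure" where
  "cpop_space p mu n = PiM {..<n} (\<lambda>_. measure_pmf (bernoulli_pmf p) \<Otimes>\<^sub>M mu)"

definition Zr :: "(nat \<Rightarrow> bool \<times> (ennreal \<times> ennreal)) \<Rightarrow> nat \<Rightarrow> bool" where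
  "Zr \<omega> i = fst (\<omega> i)"

definition Tr :: "(nat \<Rightarrow> real) \<Rightarrow> (nat \<Rightarrow> real) \<Rightarrow> (nat \<Rightarrow> bool \<times> (ennreal \<times> ennreal)) \<Rightarrow> nat \<Rightarrow> real" where
  "Tr T1 T0 \<omega> i = (if Zr \<omega> i then T1 i else T0 i)"

definition Cr :: "(nat \<Rightarrow> bool \<times> (ennreal \<times> ennreal)) \<Rightarrow> nat \<Rightarrow> ennreal" where
  "Cr \<omega> i = (if Zr \<omega> i then fst (snd (\<omega> i)) else snd (snd (\<omega> i)))"

definition Wr :: "(nat \<Rightarrow> real) \<Rightarrow> (nat \<Rightarrow> real) \<Rightarrow> (nat \<Rightarrow> bool \<times> (ennreal \<times> ennreal)) \<Rightarrow> nat \<Rightarrow> ennreal" where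
  "Wr T1 T0 \<omega> i = min (ennreal (Tr T1 T0 \<omega> i)) (Cr \<omega> i)"

definition Deltar :: "(nat \<Rightarrow> real) \<Rightarrow> (nat \<Rightarrow> real) \<Rightarrow> (nat \<Rightarrow> bool \<times> (ennreal \<times> ennreal)) \<Rightarrow> nat \<Rightarrow> bool" where
  "Deltar T1 T0 \<omega> i = (ennreal (Tr T1 T0 \<omega> i) \<le> Cr \<omega> i)"

text \<open>Distinct values t_1 < ... < t_K of {T_i(0)}; t_k is (event_times T0 n) ! (k-1).\<close>
definition event_times :: "(nat \<Rightarrow> real) \<Rightarrow> nat \<Rightarrow> real list" where
  "event_times T0 n = sorted_list_of_set (T0 ` {..<n})"

definition N1c :: "nat \<Rightarrow> (nat \<Rightarrow> real) \<Rightarrow> (nat \<Rightarrow> real) \<Rightarrow> real \<Rightarrow> (nat \<Rightarrow> bool \<times> (ennreal \<times> ennreal)) \<Rightarrow> real" where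
  "N1c n T1 T0 t \<omega> = real (card {i\<in>{..<n}. Zr \<omega> i \<and> ennreal t \<le> Wr T1 T0 \<omega> i})"

definition Nc :: "nat \<Rightarrow> (nat \<Rightarrow> real) \<Rightarrow> (nat \<Rightarrow> real) \<Rightarrow> real \<Rightarrow> (nat \<Rightarrow> bool \<times> (ennreal \<times> ennreal)) \<Rightarrow> real" where
  "Nc n T1 T0 t \<omega> = real (card {i\<in>{..<n}. ennreal t \<le> Wr T1 T0 \<omega> i})"

definition Dc :: "nat \<Rightarrow> (nat \<Rightarrow> real) \<Rightarrow> (nat \<Rightarrow> real) \<Rightarrow> real \<Rightarrow> (nat \<Rightarrow> bool \<times> (ennreal \<times> ennreal)) \<Rightarrow> real" where
  "Dc n T1 T0 t \<omega> = real (card {i\<in>{..<n}. Deltar T1 T0 \<omega> i \<and> Wr T1 T0 \<omega> i = ennreal t})"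

text \<open>Elementary conditional expectation of X given a discrete random variable Y:
  E[X | Y](w) = E[X; Y = Y(w)] / P(Y = Y(w)), with 0/0 = 0.\<close>
definition cond_exp_disc :: "'a measure \<Rightarrow> ('a \<Rightarrow> real) \<Rightarrow> ('a \<Rightarrow> 'b) \<Rightarrow> 'a \<Rightarrow> real" where
  "cond_exp_disc M X Y \<omega> =
     (\<integral>x. X x * indicator {y\<in>space M. Y y = Y \<omega>} x \<partial>M) / measure M {y\<in>space M. Y y = Y \<omega>}"

definition xi1 :: "real \<Rightarrow> (ennreal \<times> ennreal) measure \<Rightarrow> nat \<Rightarrow> (nat \<Rightarrow> real) \<Rightarrow> (nat \<Rightarrow> real) \<Rightarrow> real
                   \<Rightarrow> (nat \<Rightarrow> bool \<times> (ennreal \<times> ennreal)) \<Rightarrow> real" where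
  "xi1 p mu n T1 T0 t \<omega> =
     (let D = Dc n T1 T0 t \<omega>; N = Nc n T1 T0 t \<omega>; N1 = N1c n T1 T0 t \<omega> in
      D * (N - D) / (N\<^sup>2 * (N - 1)) *
      (N1 * (N - N1) -
       cond_exp_disc (cpop_space p mu n)
         (\<lambda>w. N1c n T1 T0 t w * (Nc n T1 T0 t w - N1c n T1 T0 t w)) (Nc n T1 T0 t) \<omega>))"

end

theory Submission
  imports Defs
begin

text \<open>
  Under H0, unit i is at risk at time t iff t <= T_i(0) and t <= C_i(Z_i). By Bayes' rule the pair
  (Z_i, [t <= C_i(Z_i)]) can be drawn censoring indicator first and Z_i second, so N_t is binomial
  and, given N_t = m, N_{1t} is Bin(m, pi) with pi = P(Z = 1 | t <= C_Z). The conditional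
  expectation in xi_{1t} is therefore the binomial mean of k (m - k), and Hoeffding's inequality
  with L = ln n bounds |N_{1t} (N_t - N_{1t}) - E[. | N_t]| by 3 sqrt(ln n) N_t^(3/2) outside an
  event of probability 2/n^2; this gives |xi_{1t}| <= 6 sqrt(ln n) D_t / sqrt N_t. Since
  D_{t_k} <= N_{t_k} - N_{t_(k+1)}, the sum of D_t / sqrt N_t telescopes to at most 2 sqrt n, and
  a union bound over the at most n event times yields P(|sum_k xi_{1k}| > 12 sqrt(n ln n)) <= 2/n.
\<close>

section \<open>Bernoulli pairs and Bayes' rule\<close>

definition cond_bernoulli_pmf :: "real \<Rightarrow> (bool \<Rightarrow> real) \<Rightarrow> (bool \<times> bool) pmf" where
  "cond_bernoulli_pmf p q = bernoulli_pmf p \<bind> (\<lambda>z. map_pmf (Pair z) (bernoulli_pmf (q z)))"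

lemma pmf_cond_bernoulli_pmf:
  assumes "p \<in> {0..1}" "q z \<in> {0..1}"
  shows "pmf (cond_bernoulli_pmf p q) (z, r) =
           (if z then p else 1 - p) * (if r then q z else 1 - q z)"
proof -
  have "pmf (map_pmf (Pair z') (bernoulli_pmf (q z'))) (z, r) =
          (if z' = z then pmf (bernoulli_pmf (q z')) r else 0)" for z'
    by (cases "z' = z") (auto simp: pmf_map vimage_def measure_pmf_single)
  then show ?thesis
    using assms unfolding cond_bernoulli_pmf_def pmf_bind by (cases z; cases r) auto
qed

lemma cond_bernoulli_pmf_swap:
  assumes p: "p \<in> {0..1}" and q: "\<And>z. q z \<in> {0..1}"
  defines "\<rho> \<equiv> p * q True + (1 - p) * q False"
  defines "\<pi> \<equiv> \<lambda>r. if r then p * q True / \<rho> else p * (1 - q True) / (1 - \<rho>)"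
  shows "\<rho> \<in> {0..1}" "\<And>r. \<pi> r \<in> {0..1}"
    and "cond_bernoulli_pmf p q = map_pmf prod.swap (cond_bernoulli_pmf \<rho> \<pi>)"
proof -
  have nonneg: "0 \<le> p * q True" "0 \<le> (1 - p) * q False"
      "0 \<le> p * (1 - q True)" "0 \<le> (1 - p) * (1 - q False)"
    using p q[of True] q[of False] by auto
  have compl: "1 - \<rho> = p * (1 - q True) + (1 - p) * (1 - q False)"
    unfolding \<rho>_def by (simp add: algebra_simps)
  show \<rho>: "\<rho> \<in> {0..1}"
    using nonneg compl unfolding \<rho>_def by auto
  show \<pi>: "\<pi> r \<in> {0..1}" for r
    using nonneg compl unfolding \<pi>_def \<rho>_def by (auto simp: divide_le_eq_1)
  have "p * q True = 0" if "\<rho> = 0"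
    using nonneg that unfolding \<rho>_def by linarith
  then have joint_TT: "\<rho> * \<pi> True = p * q True"
    unfolding \<pi>_def by (cases "\<rho> = 0") simp_all
  have "p * (1 - q True) = 0" if "1 - \<rho> = 0"
    using nonneg that compl by linarith
  then have joint_TF: "(1 - \<rho>) * \<pi> False = p * (1 - q True)"
    unfolding \<pi>_def by (cases "1 - \<rho> = 0") simp_all
  have joint_FT: "\<rho> * (1 - \<pi> True) = (1 - p) * q False"
    using joint_TT by (simp add: algebra_simps \<rho>_def)
  have "(1 - \<rho>) * (1 - \<pi> False) = (1 - \<rho>) - (1 - \<rho>) * \<pi> False"
    by (simp add: algebra_simps)
  then have joint_FF: "(1 - \<rho>) * (1 - \<pi> False) = (1 - p) * (1 - q False)"
    using joint_TF compl by linarith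
  show "cond_bernoulli_pmf p q = map_pmf prod.swap (cond_bernoulli_pmf \<rho> \<pi>)"
  proof (rule pmf_eqI)
    fix x :: "bool \<times> bool"
    obtain z r where x: "x = (z, r)" by (cases x)
    have "pmf (map_pmf prod.swap (cond_bernoulli_pmf \<rho> \<pi>)) (z, r) = pmf (cond_bernoulli_pmf \<rho> \<pi>) (r, z)"
      using pmf_map_inj'[of prod.swap _ "(r, z)"] by simp
    then show "pmf (cond_bernoulli_pmf p q) x = pmf (map_pmf prod.swap (cond_bernoulli_pmf \<rho> \<pi>)) x"
      unfolding x using p q \<rho> \<pi> joint_TT joint_TF joint_FT joint_FF
      by (cases z; cases r) (simp_all add: pmf_cond_bernoulli_pmf mult.commute)
  qed
qed

section \<open>A binomial number of binomial trials\<close>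

definition nested_binomial_pmf :: "nat \<Rightarrow> real \<Rightarrow> real \<Rightarrow> (nat \<times> nat) pmf" where
  "nested_binomial_pmf n \<rho> \<pi> = binomial_pmf n \<rho> \<bind> (\<lambda>m. map_pmf (Pair m) (binomial_pmf m \<pi>))"

lemma set_pmf_binomial_subset: "p \<in> {0..1} \<Longrightarrow> set_pmf (binomial_pmf n p) \<subseteq> {..n}"
  by (auto simp: set_pmf_binomial_eq)

lemma set_pmf_nested_binomial_pmf:
  assumes "\<rho> \<in> {0..1}" "\<pi> \<in> {0..1}" "x \<in> set_pmf (nested_binomial_pmf n \<rho> \<pi>)"
  shows "fst x \<in> set_pmf (binomial_pmf n \<rho>)" "snd x \<le> fst x"
  using assms by (auto simp: nested_binomial_pmf_def set_pmf_binomial_eq split: if_splits)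

lemma map_fst_nested_binomial_pmf: "map_pmf fst (nested_binomial_pmf n \<rho> \<pi>) = binomial_pmf n \<rho>"
  by (simp add: nested_binomial_pmf_def map_bind_pmf map_pmf_comp bind_return_pmf')

lemma expectation_nested_binomial_pmf:
  fixes f :: "nat \<times> nat \<Rightarrow> real"
  assumes \<rho>: "\<rho> \<in> {0..1}" and \<pi>: "\<pi> \<in> {0..1}"
  shows "measure_pmf.expectation (nested_binomial_pmf n \<rho> \<pi>) f =
           (\<Sum>m\<le>n. pmf (binomial_pmf n \<rho>) m * measure_pmf.expectation (binomial_pmf m \<pi>) (\<lambda>k. f (m, k)))"
  unfolding nested_binomial_pmf_def
  by (subst pmf_expectation_bind[of "{..n}"])
     (use \<rho> \<pi> set_pmf_binomial_subset in \<open>auto simp: integral_map_pmf intro!: finite_imageI\<close>)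

lemma cond_exp_disc_nested_binomial_pmf:
  fixes f :: "nat \<times> nat \<Rightarrow> real"
  assumes \<rho>: "\<rho> \<in> {0..1}" and \<pi>: "\<pi> \<in> {0..1}" and x: "x \<in> set_pmf (nested_binomial_pmf n \<rho> \<pi>)"
  shows "cond_exp_disc (measure_pmf (nested_binomial_pmf n \<rho> \<pi>)) f (\<lambda>y. real (fst y)) x =
           measure_pmf.expectation (binomial_pmf (fst x) \<pi>) (\<lambda>k. f (fst x, k))"
proof -
  define m where "m = fst x"
  let ?Q = "nested_binomial_pmf n \<rho> \<pi>"
  have m: "m \<in> set_pmf (binomial_pmf n \<rho>)"
    unfolding m_def using set_pmf_nested_binomial_pmf(1)[OF \<rho> \<pi> x] .
  then have "m \<le> n"
    using set_pmf_binomial_subset[OF \<rho>] by auto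
  have den: "measure_pmf.prob ?Q {y. fst y = m} = pmf (binomial_pmf n \<rho>) m"
    using measure_map_pmf[of fst ?Q "{m}"]
    by (simp add: vimage_def map_fst_nested_binomial_pmf measure_pmf_single)
  have "measure_pmf.expectation ?Q (\<lambda>y. f y * indicator {y. fst y = m} y) =
      (\<Sum>a\<le>n. pmf (binomial_pmf n \<rho>) a * measure_pmf.expectation (binomial_pmf a \<pi>) (\<lambda>k. f (a, k) * indicator {m} a))"
    unfolding expectation_nested_binomial_pmf[OF \<rho> \<pi>] by (simp add: indicator_def)
  also have "\<dots> = (\<Sum>a\<le>n. if a = m then pmf (binomial_pmf n \<rho>) m * measure_pmf.expectation (binomial_pmf m \<pi>) (\<lambda>k. f (m, k)) else 0)"
    by (intro sum.cong) auto
  also have "\<dots> = pmf (binomial_pmf n \<rho>) m * measure_pmf.expectation (binomial_pmf m \<pi>) (\<lambda>k. f (m, k))"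
    using \<open>m \<le> n\<close> by simp
  finally have num: "measure_pmf.expectation ?Q (\<lambda>y. f y * indicator {y. fst y = m} y) =
      pmf (binomial_pmf n \<rho>) m * measure_pmf.expectation (binomial_pmf m \<pi>) (\<lambda>k. f (m, k))" .
  have "pmf (binomial_pmf n \<rho>) m \<noteq> 0"
    using m by (simp add: set_pmf_eq)
  then show ?thesis
    unfolding cond_exp_disc_def m_def[symmetric] by (simp add: num den)
qed

lemma binomial_pmf_deviation:
  assumes \<pi>: "\<pi> \<in> {0..1}" and L: "0 \<le> L"
  shows "measure_pmf.prob (binomial_pmf m \<pi>) {k. sqrt (real m * L) < \<bar>real k - \<pi> * real m\<bar>} \<le> 2 * exp (-2 * L)"
proof (cases "m = 0")
  case True
  then show ?thesis
    using \<pi> by (simp add: binomial_pmf_0)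
next
  case False
  interpret binomial_distribution m \<pi>
    by unfold_locales (rule \<pi>)
  have "measure_pmf.prob (binomial_pmf m \<pi>) {k. sqrt (real m * L) < \<bar>real k - \<pi> * real m\<bar>}
      \<le> measure_pmf.prob (binomial_pmf m \<pi>) {k. sqrt (real m * L) \<le> \<bar>real k - real m * \<pi>\<bar>}"
    by (intro measure_pmf.finite_measure_mono) (auto simp: mult.commute)
  also have "\<dots> \<le> 2 * exp (-2 * (sqrt (real m * L))\<^sup>2 / real m)"
    using prob_abs_ge[of "sqrt (real m * L)"] L by simp
  also have "\<dots> = 2 * exp (-2 * L)"
    using False L by simp
  finally show ?thesis .
qed

lemma nested_binomial_pmf_deviation:
  assumes \<rho>: "\<rho> \<in> {0..1}" and \<pi>: "\<pi> \<in> {0..1}" and L: "0 \<le> L"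
  shows "measure_pmf.prob (nested_binomial_pmf n \<rho> \<pi>)
           {x. sqrt (real (fst x) * L) < \<bar>real (snd x) - \<pi> * real (fst x)\<bar>} \<le> 2 * exp (-2 * L)"
proof -
  let ?dev = "\<lambda>m. {k. sqrt (real m * L) < \<bar>real k - \<pi> * real m\<bar>}"
  have "{x. sqrt (real (fst x) * L) < \<bar>real (snd x) - \<pi> * real (fst x)\<bar>} = {x. snd x \<in> ?dev (fst x)}"
    by simp
  moreover have "indicator {x. snd x \<in> ?dev (fst x)} (m, k) = (indicator (?dev m) k :: real)" for m k
    by (simp add: indicator_def)
  ultimately have "measure_pmf.prob (nested_binomial_pmf n \<rho> \<pi>) {x. sqrt (real (fst x) * L) < \<bar>real (snd x) - \<pi> * real (fst x)\<bar>}
      = (\<Sum>m\<le>n. pmf (binomial_pmf n \<rho>) m * measure_pmf.prob (binomial_pmf m \<pi>) (?dev m))"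
    using expectation_nested_binomial_pmf[OF \<rho> \<pi>, of n "indicator {x. snd x \<in> ?dev (fst x)}"]
    by simp
  also have "\<dots> \<le> (\<Sum>m\<le>n. pmf (binomial_pmf n \<rho>) m * (2 * exp (-2 * L)))"
    by (intro sum_mono mult_left_mono binomial_pmf_deviation \<pi> L) simp
  also have "\<dots> = 2 * exp (-2 * L)"
    using sum_pmf_eq_1[OF _ set_pmf_binomial_subset[OF \<rho>]] by (simp flip: sum_distrib_right)
  finally show ?thesis .
qed

lemma abs_diff_mult_complement_le:
  fixes x k m :: real
  assumes "0 \<le> x" "x \<le> m" "0 \<le> k" "k \<le> m"
  shows "\<bar>x * (m - x) - k * (m - k)\<bar> \<le> m * \<bar>x - k\<bar>"
proof -
  have "\<bar>x * (m - x) - k * (m - k)\<bar> = \<bar>x - k\<bar> * \<bar>m - x - k\<bar>"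
    by (simp add: algebra_simps flip: abs_mult)
  also have "\<dots> \<le> \<bar>x - k\<bar> * m"
    using assms by (intro mult_left_mono) auto
  finally show ?thesis
    by (simp add: mult.commute)
qed

lemma abs_diff_mult_complement_le_deviation:
  fixes x c s m :: real
  assumes x: "0 \<le> x" "x \<le> m" and k: "real k \<le> m" and s: "0 \<le> s" "\<bar>x - c\<bar> \<le> s"
  shows "\<bar>x * (m - x) - real k * (m - real k)\<bar> \<le> m * (2 * s + m * indicator {j. s < \<bar>real j - c\<bar>} k)"
proof -
  have "\<bar>x - real k\<bar> \<le> 2 * s + m * indicator {j. s < \<bar>real j - c\<bar>} k"
  proof (cases "s < \<bar>real k - c\<bar>")
    case True
    then show ?thesis
      using x k s by auto
  next
    case False
    then show ?thesis
      using s by auto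
  qed
  then have "m * \<bar>x - real k\<bar> \<le> m * (2 * s + m * indicator {j. s < \<bar>real j - c\<bar>} k)"
    using x by (intro mult_left_mono) auto
  moreover have "\<bar>x * (m - x) - real k * (m - real k)\<bar> \<le> m * \<bar>x - real k\<bar>"
    using x k by (intro abs_diff_mult_complement_le) auto
  ultimately show ?thesis
    by linarith
qed

lemma binomial_quadratic_deviation:
  fixes x L :: real
  assumes \<pi>: "\<pi> \<in> {0..1}" and L: "0 \<le> L" and x: "0 \<le> x" "x \<le> real m"
    and dev: "\<bar>x - \<pi> * real m\<bar> \<le> sqrt (real m * L)"
  shows "\<bar>x * (real m - x) - measure_pmf.expectation (binomial_pmf m \<pi>) (\<lambda>k. real k * (real m - real k))\<bar>
           \<le> real m * (2 * sqrt (real m * L) + 2 * real m * exp (-2 * L))"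
proof -
  define s where "s = sqrt (real m * L)"
  define S where "S = {k. s < \<bar>real k - \<pi> * real m\<bar>}"
  have [simp]: "integrable (measure_pmf (binomial_pmf m \<pi>)) f" for f :: "nat \<Rightarrow> real"
    using \<pi> by (simp add: integrable_measure_pmf_finite)
  have "\<bar>x * (real m - x) - measure_pmf.expectation (binomial_pmf m \<pi>) (\<lambda>k. real k * (real m - real k))\<bar>
      = \<bar>measure_pmf.expectation (binomial_pmf m \<pi>) (\<lambda>k. x * (real m - x) - real k * (real m - real k))\<bar>"
    by simp
  also have "\<dots> \<le> measure_pmf.expectation (binomial_pmf m \<pi>) (\<lambda>k. \<bar>x * (real m - x) - real k * (real m - real k)\<bar>)"
    by (rule integral_abs_bound)
  also have "\<dots> \<le> measure_pmf.expectation (binomial_pmf m \<pi>) (\<lambda>k. real m * (2 * s + real m * indicator S k))"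
  proof (intro integral_mono_AE AE_pmfI)
    fix k assume "k \<in> set_pmf (binomial_pmf m \<pi>)"
    then have "k \<le> m"
      using set_pmf_binomial_subset[OF \<pi>] by auto
    then show "\<bar>x * (real m - x) - real k * (real m - real k)\<bar> \<le> real m * (2 * s + real m * indicator S k)"
      unfolding S_def using x L dev by (intro abs_diff_mult_complement_le_deviation) (auto simp: s_def)
  qed simp_all
  also have "\<dots> = real m * (2 * s + real m * measure_pmf.prob (binomial_pmf m \<pi>) S)"
    by simp
  also have "\<dots> \<le> real m * (2 * s + real m * (2 * exp (-2 * L)))"
    using binomial_pmf_deviation[OF \<pi> L, of m] unfolding S_def s_def
    by (intro mult_left_mono add_left_mono) auto
  finally show ?thesis
    by (simp add: s_def mult_ac)
qed

lemma nested_binomial_cond_exp_deviation: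
  assumes \<rho>: "\<rho> \<in> {0..1}" and \<pi>: "\<pi> \<in> {0..1}" and L: "0 \<le> L"
  defines "g \<equiv> \<lambda>y :: nat \<times> nat. real (snd y) * (real (fst y) - real (snd y))"
  shows "measure_pmf.prob (nested_binomial_pmf n \<rho> \<pi>)
           {x. real (fst x) * (2 * sqrt (real (fst x) * L) + 2 * real (fst x) * exp (-2 * L)) <
               \<bar>g x - cond_exp_disc (measure_pmf (nested_binomial_pmf n \<rho> \<pi>)) g (\<lambda>y. real (fst y)) x\<bar>}
         \<le> 2 * exp (-2 * L)"
    (is "measure_pmf.prob ?Q ?bad \<le> _")
proof -
  let ?dev = "{x. sqrt (real (fst x) * L) < \<bar>real (snd x) - \<pi> * real (fst x)\<bar>}"
  have "?bad \<subseteq> - set_pmf ?Q \<union> ?dev"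
  proof
    fix x assume bad: "x \<in> ?bad"
    show "x \<in> - set_pmf ?Q \<union> ?dev"
    proof (rule ccontr)
      assume "x \<notin> - set_pmf ?Q \<union> ?dev"
      then have x: "x \<in> set_pmf ?Q"
        and dev: "\<bar>real (snd x) - \<pi> * real (fst x)\<bar> \<le> sqrt (real (fst x) * L)"
        by auto
      obtain m k where mk: "x = (m, k)"
        by (cases x)
      have "k \<le> m"
        using set_pmf_nested_binomial_pmf(2)[OF \<rho> \<pi> x] by (simp add: mk)
      then have "\<bar>real k * (real m - real k) - measure_pmf.expectation (binomial_pmf m \<pi>) (\<lambda>j. real j * (real m - real j))\<bar>
          \<le> real m * (2 * sqrt (real m * L) + 2 * real m * exp (-2 * L))"
        using dev by (intro binomial_quadratic_deviation \<pi> L) (simp_all add: mk)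
      then show False
        using bad cond_exp_disc_nested_binomial_pmf[OF \<rho> \<pi> x[unfolded mk]] by (simp add: mk g_def)
    qed
  qed
  then have "measure_pmf.prob ?Q ?bad \<le> measure_pmf.prob ?Q (- set_pmf ?Q \<union> ?dev)"
    by (intro measure_pmf.finite_measure_mono) simp_all
  also have "\<dots> \<le> measure_pmf.prob ?Q (- set_pmf ?Q) + measure_pmf.prob ?Q ?dev"
    by (intro measure_Un_le) simp_all
  also have "measure_pmf.prob ?Q (- set_pmf ?Q) = 0"
    by (simp add: measure_pmf_zero_iff)
  finally show ?thesis
    using nested_binomial_pmf_deviation[OF \<rho> \<pi> L, of n] by simp
qed

lemma cond_exp_disc_distr:
  assumes X: "X \<in> measurable M (count_space UNIV)"
  shows "cond_exp_disc M (\<lambda>w. f (X w)) (\<lambda>w. g (X w)) \<omega> =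
           cond_exp_disc (distr M (count_space UNIV) X) f g (X \<omega>)"
proof -
  let ?A = "{x. g x = g (X \<omega>)}"
  have A: "{y\<in>space M. g (X y) = g (X \<omega>)} = X -` ?A \<inter> space M"
    by auto
  have "(\<integral>x. f x * indicator ?A x \<partial>distr M (count_space UNIV) X) = (\<integral>w. f (X w) * indicator ?A (X w) \<partial>M)"
    by (rule integral_distr[OF X]) simp
  also have "\<dots> = (\<integral>w. f (X w) * indicator {y\<in>space M. g (X y) = g (X \<omega>)} w \<partial>M)"
    by (intro Bochner_Integration.integral_cong) (auto simp: indicator_def)
  finally show ?thesis
    unfolding cond_exp_disc_def A using measure_distr[OF X, of ?A] by simp
qed

section \<open>Counting treated units at risk\<close>

lemma card_Pi_pmf_bernoulli:
  assumes A: "finite A" and S: "S \<subseteq> A" and p: "p \<in> {0..1}" and q: "\<And>i. i \<in> S \<Longrightarrow> q i = p"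
  shows "map_pmf (\<lambda>f. card {i\<in>S. f i}) (Pi_pmf A False (\<lambda>i. bernoulli_pmf (q i))) =
           binomial_pmf (card S) p"
proof -
  have "{i. (i \<in> S \<longrightarrow> f i) \<and> i \<in> S} = {i\<in>S. f i}" for f :: "'a \<Rightarrow> bool"
    by auto
  then have "map_pmf (\<lambda>f. card {i\<in>S. f i}) (Pi_pmf A False (\<lambda>i. bernoulli_pmf (q i))) =
               map_pmf (\<lambda>f. card {i\<in>S. f i}) (Pi_pmf S False (\<lambda>i. bernoulli_pmf (q i)))"
    by (simp add: Pi_pmf_subset[OF A S] map_pmf_comp)
  also have "Pi_pmf S False (\<lambda>i. bernoulli_pmf (q i)) = Pi_pmf S False (\<lambda>_. bernoulli_pmf p)"
    using q by (intro Pi_pmf_cong) auto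
  also have "map_pmf (\<lambda>f. card {i\<in>S. f i}) \<dots> = binomial_pmf (card S) p"
    by (rule binomial_pmf_altdef'[symmetric]) (use finite_subset[OF S A] p in auto)
  finally show ?thesis .
qed

definition count_at_risk :: "'i set \<Rightarrow> ('i \<Rightarrow> bool) \<Rightarrow> ('i \<Rightarrow> bool \<times> bool) \<Rightarrow> nat \<times> nat" where
  "count_at_risk I e y = (card {i\<in>I. e i \<and> snd (y i)}, card {i\<in>I. e i \<and> fst (y i) \<and> snd (y i)})"

lemma count_at_risk_restrict: "count_at_risk I e (restrict y I) = count_at_risk I e y"
  unfolding count_at_risk_def by (auto intro!: arg_cong[where f = card])

lemma count_at_risk_given_risk:
  assumes I: "finite I" and \<pi>: "\<pi> \<in> {0..1}"
  shows "map_pmf (count_at_risk I e)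
           (Pi_pmf I (False, False) (\<lambda>i. map_pmf (\<lambda>z. (z, R i)) (bernoulli_pmf (if R i then \<pi> else \<pi>'))))
         = map_pmf (Pair (card {i\<in>I. e i \<and> R i})) (binomial_pmf (card {i\<in>I. e i \<and> R i}) \<pi>)"
    (is "map_pmf _ ?W = _")
proof -
  define S where "S = {i\<in>I. e i \<and> R i}"
  have "map_pmf (count_at_risk I e) ?W = map_pmf (\<lambda>y. (card S, card {i\<in>S. fst (y i)})) ?W"
  proof (rule map_pmf_cong[OF refl])
    fix y assume "y \<in> set_pmf ?W"
    then have "\<forall>i\<in>I. snd (y i) = R i"
      by (auto simp: set_Pi_pmf[OF I] PiE_dflt_def)
    then show "count_at_risk I e y = (card S, card {i\<in>S. fst (y i)})"
      unfolding count_at_risk_def S_def by (auto intro!: arg_cong[where f = card])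
  qed
  also have "\<dots> = map_pmf (Pair (card S)) (map_pmf (\<lambda>z. card {i\<in>S. z i}) (map_pmf (\<lambda>y. fst \<circ> y) ?W))"
    by (simp add: map_pmf_comp)
  also have "map_pmf (\<lambda>y. fst \<circ> y) ?W = Pi_pmf I False (\<lambda>i. bernoulli_pmf (if R i then \<pi> else \<pi>'))"
    by (subst Pi_pmf_map[OF I, symmetric]) (simp_all add: map_pmf_comp)
  also have "map_pmf (\<lambda>z. card {i\<in>S. z i}) \<dots> = binomial_pmf (card S) \<pi>"
    by (rule card_Pi_pmf_bernoulli[OF I _ \<pi>]) (auto simp: S_def)
  finally show ?thesis unfolding S_def .
qed

lemma count_at_risk_Pi_cond_bernoulli:
  assumes I: "finite I" and p: "p \<in> {0..1}" and q: "\<And>z. q z \<in> {0..1}"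
  defines "\<rho> \<equiv> p * q True + (1 - p) * q False"
  defines "\<pi> \<equiv> p * q True / \<rho>"
  shows "map_pmf (count_at_risk I e) (Pi_pmf I (False, False) (\<lambda>_. cond_bernoulli_pmf p q)) =
           nested_binomial_pmf (card {i\<in>I. e i}) \<rho> \<pi>"
proof -
  define \<pi>' where "\<pi>' = p * (1 - q True) / (1 - \<rho>)"
  note swap = cond_bernoulli_pmf_swap[OF p q]
  have \<rho>: "\<rho> \<in> {0..1}" and \<pi>: "\<pi> \<in> {0..1}"
    using swap(1) swap(2)[of True] by (simp_all add: \<rho>_def \<pi>_def)
  have "cond_bernoulli_pmf p q =
      bernoulli_pmf \<rho> \<bind> (\<lambda>r. map_pmf (\<lambda>z. (z, r)) (bernoulli_pmf (if r then \<pi> else \<pi>')))"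
    by (subst swap(3)) (simp add: cond_bernoulli_pmf_def map_bind_pmf map_pmf_comp \<rho>_def \<pi>_def \<pi>'_def cong: if_cong)
  then have counts: "map_pmf (count_at_risk I e) (Pi_pmf I (False, False) (\<lambda>_. cond_bernoulli_pmf p q)) =
      map_pmf (\<lambda>R. card {i\<in>I. e i \<and> R i}) (Pi_pmf I False (\<lambda>_. bernoulli_pmf \<rho>)) \<bind>
        (\<lambda>m. map_pmf (Pair m) (binomial_pmf m \<pi>))"
    by (simp add: Pi_pmf_bind[OF I, where d' = False] map_bind_pmf bind_map_pmf count_at_risk_given_risk[OF I \<pi>])
  have "{i\<in>I. e i \<and> R i} = {i\<in>{i\<in>I. e i}. R i}" for R
    by auto
  then have "map_pmf (\<lambda>R. card {i\<in>I. e i \<and> R i}) (Pi_pmf I False (\<lambda>_. bernoulli_pmf \<rho>)) =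
      binomial_pmf (card {i\<in>I. e i}) \<rho>"
    using card_Pi_pmf_bernoulli[OF I _ \<rho>, of "{i\<in>I. e i}"] by auto
  then show ?thesis
    unfolding counts nested_binomial_pmf_def by simp
qed

section \<open>The randomized population at a fixed time\<close>

definition treat_at_risk :: "real \<Rightarrow> bool \<times> (ennreal \<times> ennreal) \<Rightarrow> bool \<times> bool" where
  "treat_at_risk t u = (fst u, ennreal t \<le> (if fst u then fst (snd u) else snd (snd u)))"

lemma treat_at_risk_vimage_singleton:
  assumes "space mu = UNIV"
  shows "treat_at_risk t -` {(z, r)} \<inter> space (measure_pmf (bernoulli_pmf p) \<Otimes>\<^sub>M mu) =
           {z} \<times> (if r then {c. ennreal t \<le> (if z then fst c else snd c)}
                   else space mu - {c. ennreal t \<le> (if z then fst c else snd c)})"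
  using assms by (cases z; cases r) (auto simp: treat_at_risk_def space_pair_measure)

lemma sets_censored_after: "{c :: ennreal \<times> ennreal. a \<le> (if z then fst c else snd c)} \<in> sets borel"
  by (cases z) (auto intro!: borel_closed closed_Collect_le continuous_intros)

lemma measurable_treat_at_risk:
  assumes sets: "sets mu = sets borel"
  shows "treat_at_risk t \<in> measurable (measure_pmf (bernoulli_pmf p) \<Otimes>\<^sub>M mu) (count_space UNIV)"
proof (subst measurable_count_space_eq2_countable, safe)
  fix z r :: bool
  have "{c. ennreal t \<le> (if z then fst c else snd c)} \<in> sets mu"
    using sets_censored_after[of "ennreal t" z] sets by simp
  then show "treat_at_risk t -` {(z, r)} \<inter> space (measure_pmf (bernoulli_pmf p) \<Otimes>\<^sub>M mu)
      \<in> sets (measure_pmf (bernoulli_pmf p) \<Otimes>\<^sub>M mu)"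
    unfolding treat_at_risk_vimage_singleton[OF sets_eq_imp_space_eq[OF sets, simplified]]
    by (intro pair_measureI) (auto intro: sets.compl_sets)
qed simp

lemma distr_treat_at_risk:
  assumes mu: "prob_space mu" and sets: "sets mu = sets borel" and p: "p \<in> {0..1}"
  shows "distr (measure_pmf (bernoulli_pmf p) \<Otimes>\<^sub>M mu) (count_space UNIV) (treat_at_risk t) =
           measure_pmf (cond_bernoulli_pmf p (\<lambda>z. measure mu {c. ennreal t \<le> (if z then fst c else snd c)}))"
    (is "_ = measure_pmf (cond_bernoulli_pmf p ?q)")
proof (rule measure_eqI_countable[where A = UNIV])
  interpret mu: prob_space mu
    by (fact mu)
  fix x :: "bool \<times> bool"
  obtain z r where x: "x = (z, r)"
    by (cases x)
  define C where "C = {c. ennreal t \<le> (if z then fst c else snd c)}"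
  have space: "space mu = UNIV"
    using sets_eq_imp_space_eq[OF sets] by simp
  have C: "C \<in> sets mu"
    unfolding C_def sets by (rule sets_censored_after)
  have "emeasure (distr (measure_pmf (bernoulli_pmf p) \<Otimes>\<^sub>M mu) (count_space UNIV) (treat_at_risk t)) {x}
      = emeasure (measure_pmf (bernoulli_pmf p) \<Otimes>\<^sub>M mu) ({z} \<times> (if r then C else space mu - C))"
    unfolding x C_def
    by (subst emeasure_distr) (simp_all add: measurable_treat_at_risk[OF sets] treat_at_risk_vimage_singleton[OF space])
  also have "\<dots> = emeasure (measure_pmf (bernoulli_pmf p)) {z} * emeasure mu (if r then C else space mu - C)"
    using C by (intro mu.emeasure_pair_measure_Times) auto
  also have "\<dots> = ennreal (pmf (bernoulli_pmf p) z * (if r then ?q z else 1 - ?q z))"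
    using C by (simp add: emeasure_pmf_single mu.emeasure_eq_measure mu.prob_compl ennreal_mult' C_def)
  also have "\<dots> = emeasure (measure_pmf (cond_bernoulli_pmf p ?q)) {x}"
    using p by (simp add: x emeasure_pmf_single pmf_cond_bernoulli_pmf)
  finally show "emeasure (distr (measure_pmf (bernoulli_pmf p) \<Otimes>\<^sub>M mu) (count_space UNIV) (treat_at_risk t)) {x}
      = emeasure (measure_pmf (cond_bernoulli_pmf p ?q)) {x}" .
qed simp_all

lemma distr_restrict_Pi_pmf:
  assumes I: "finite I"
  shows "distr (measure_pmf (Pi_pmf I d Q)) (PiM I (\<lambda>_. count_space UNIV)) (\<lambda>x. restrict x I) =
           PiM I (\<lambda>i. measure_pmf (Q i))"
proof (rule product_sigma_finite.PiM_eqI)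
  interpret product_prob_space "\<lambda>i. measure_pmf (Q i)"
    by (intro product_prob_spaceI) (simp add: measure_pmf.prob_space_axioms)
  show "product_sigma_finite (\<lambda>i. measure_pmf (Q i))"
    by unfold_locales
  show "sets (distr (measure_pmf (Pi_pmf I d Q)) (PiM I (\<lambda>_. count_space UNIV)) (\<lambda>x. restrict x I)) =
      sets (PiM I (\<lambda>i. measure_pmf (Q i)))"
    by (simp, intro sets_PiM_cong) simp_all
next
  fix A assume A: "\<And>i. i \<in> I \<Longrightarrow> A i \<in> sets (measure_pmf (Q i))"
  have "Pi\<^sub>E I A \<in> sets (PiM I (\<lambda>_. count_space UNIV))"
    using A by (intro sets_PiM_I_finite I) auto
  then have "emeasure (distr (measure_pmf (Pi_pmf I d Q)) (PiM I (\<lambda>_. count_space UNIV)) (\<lambda>x. restrict x I)) (Pi\<^sub>E I A)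
      = emeasure (measure_pmf (Pi_pmf I d Q)) ((\<lambda>x. restrict x I) -` Pi\<^sub>E I A)"
    by (subst emeasure_distr) (auto simp: space_PiM)
  also have "\<dots> = emeasure (measure_pmf (Pi_pmf I d Q)) (PiE_dflt I d A)"
    by (intro emeasure_eq_AE AE_pmfI) (auto simp: PiE_dflt_def set_Pi_pmf I)
  also have "\<dots> = (\<Prod>i\<in>I. emeasure (measure_pmf (Q i)) (A i))"
    by (simp add: measure_pmf.emeasure_eq_measure measure_Pi_pmf_PiE_dflt I prod_ennreal)
  finally show "emeasure (distr (measure_pmf (Pi_pmf I d Q)) (PiM I (\<lambda>_. count_space UNIV)) (\<lambda>x. restrict x I)) (Pi\<^sub>E I A)
      = (\<Prod>i\<in>I. emeasure (measure_pmf (Q i)) (A i))" .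
qed (fact I)

definition risk_counts ::
  "nat \<Rightarrow> (nat \<Rightarrow> real) \<Rightarrow> (nat \<Rightarrow> real) \<Rightarrow> real \<Rightarrow> (nat \<Rightarrow> bool \<times> (ennreal \<times> ennreal)) \<Rightarrow> nat \<times> nat" where
  "risk_counts n T1 T0 t \<omega> =
     (card {i\<in>{..<n}. ennreal t \<le> Wr T1 T0 \<omega> i}, card {i\<in>{..<n}. Zr \<omega> i \<and> ennreal t \<le> Wr T1 T0 \<omega> i})"

lemma Nc_eq_risk_counts: "Nc n T1 T0 t = (\<lambda>\<omega>. real (fst (risk_counts n T1 T0 t \<omega>)))"
  by (simp add: fun_eq_iff Nc_def risk_counts_def)

lemma N1c_eq_risk_counts: "N1c n T1 T0 t = (\<lambda>\<omega>. real (snd (risk_counts n T1 T0 t \<omega>)))"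
  by (simp add: fun_eq_iff N1c_def risk_counts_def)

lemma risk_counts_eq_count_at_risk:
  assumes "\<forall>i<n. T1 i = T0 i"
  shows "risk_counts n T1 T0 t =
           count_at_risk {..<n} (\<lambda>i. ennreal t \<le> ennreal (T0 i)) \<circ> compose {..<n} (treat_at_risk t)"
  using assms
  by (auto simp: fun_eq_iff risk_counts_def count_at_risk_def compose_def treat_at_risk_def
      Wr_def Tr_def Cr_def Zr_def intro!: arg_cong[where f = card])

lemma measurable_count_at_risk:
  assumes "finite I"
  shows "count_at_risk I e \<in> measurable (PiM I (\<lambda>_. count_space UNIV)) (count_space UNIV)"
  using assms by (simp add: count_space_PiM_finite)

lemma measurable_compose_treat_at_risk:
  assumes "sets mu = sets borel"
  shows "compose {..<n} (treat_at_risk t) \<in> measurable (cpop_space p mu n) (PiM {..<n} (\<lambda>_. count_space UNIV))"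
  using measurable_treat_at_risk[OF assms] unfolding cpop_space_def compose_def by measurable

lemma measurable_risk_counts:
  assumes "sets mu = sets borel" and "\<forall>i<n. T1 i = T0 i"
  shows "risk_counts n T1 T0 t \<in> measurable (cpop_space p mu n) (count_space UNIV)"
  unfolding risk_counts_eq_count_at_risk[OF assms(2)]
  by (intro measurable_comp[OF measurable_compose_treat_at_risk[OF assms(1)]] measurable_count_at_risk) simp

lemma distr_compose_treat_at_risk:
  fixes t :: real
  assumes mu: "prob_space mu" and sets: "sets mu = sets borel" and p: "p \<in> {0..1}"
  defines "Q \<equiv> cond_bernoulli_pmf p (\<lambda>z. measure mu {c. ennreal t \<le> (if z then fst c else snd c)})"
  shows "distr (cpop_space p mu n) (PiM {..<n} (\<lambda>_. count_space UNIV)) (compose {..<n} (treat_at_risk t)) =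
           distr (measure_pmf (Pi_pmf {..<n} (False, False) (\<lambda>_. Q))) (PiM {..<n} (\<lambda>_. count_space UNIV))
             (\<lambda>x. restrict x {..<n})"
proof -
  have unit: "distr (measure_pmf (bernoulli_pmf p) \<Otimes>\<^sub>M mu) (measure_pmf Q) (treat_at_risk t) = measure_pmf Q"
    using distr_treat_at_risk[OF mu sets p, of t] unfolding Q_def
    by (simp add: distr_cong[OF refl sets_measure_pmf_count_space])
  have "distr (cpop_space p mu n) (PiM {..<n} (\<lambda>_. count_space UNIV)) (compose {..<n} (treat_at_risk t)) =
      distr (cpop_space p mu n) (PiM {..<n} (\<lambda>_. measure_pmf Q)) (compose {..<n} (treat_at_risk t))"
    by (intro distr_cong sets_PiM_cong) simp_all
  also have "\<dots> = PiM {..<n} (\<lambda>_. distr (measure_pmf (bernoulli_pmf p) \<Otimes>\<^sub>M mu) (measure_pmf Q) (treat_at_risk t))"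
    unfolding cpop_space_def using measurable_treat_at_risk[OF sets, of t p]
    by (intro distr_PiM_finite_prob_space')
       (simp_all add: prob_space_pair mu measure_pmf.prob_space_axioms measurable_cong_sets[OF refl sets_measure_pmf_count_space])
  also have "\<dots> = distr (measure_pmf (Pi_pmf {..<n} (False, False) (\<lambda>_. Q))) (PiM {..<n} (\<lambda>_. count_space UNIV))
      (\<lambda>x. restrict x {..<n})"
    unfolding unit by (rule distr_restrict_Pi_pmf[symmetric]) simp
  finally show ?thesis .
qed

lemma distr_risk_counts:
  assumes mu: "prob_space mu" and sets: "sets mu = sets borel" and p: "p \<in> {0..1}"
    and H0: "\<forall>i<n. T1 i = T0 i"
  obtains \<rho> \<pi> where "\<rho> \<in> {0..1}" "\<pi> \<in> {0..1}"
    "distr (cpop_space p mu n) (count_space UNIV) (risk_counts n T1 T0 t) =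
       measure_pmf (nested_binomial_pmf (card {i\<in>{..<n}. ennreal t \<le> ennreal (T0 i)}) \<rho> \<pi>)"
proof -
  define q where "q = (\<lambda>z. measure mu {c. ennreal t \<le> (if z then fst c else snd c)})"
  define \<rho> where "\<rho> = p * q True + (1 - p) * q False"
  define I where "I = {..<n}"
  define G where "G = compose I (treat_at_risk t)"
  define H where "H = count_at_risk I (\<lambda>i. ennreal t \<le> ennreal (T0 i))"
  let ?PM = "PiM I (\<lambda>_. count_space (UNIV :: (bool \<times> bool) set))"
  let ?P = "Pi_pmf I (False, False) (\<lambda>_. cond_bernoulli_pmf p q)"
  have q: "q z \<in> {0..1}" for z
    using prob_space.prob_le_1[OF mu] by (simp add: q_def)
  note swap = cond_bernoulli_pmf_swap[of p q, OF p q]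
  have I: "finite I"
    by (simp add: I_def)
  have G: "G \<in> measurable (cpop_space p mu n) ?PM"
    unfolding G_def I_def by (rule measurable_compose_treat_at_risk[OF sets])
  have H: "H \<in> measurable ?PM (count_space UNIV)"
    unfolding H_def by (rule measurable_count_at_risk[OF I])
  have "distr (cpop_space p mu n) (count_space UNIV) (H \<circ> G) =
      distr (distr (cpop_space p mu n) ?PM G) (count_space UNIV) H"
    using G H by (simp add: distr_distr)
  also have "distr (cpop_space p mu n) ?PM G = distr (measure_pmf ?P) ?PM (\<lambda>x. restrict x I)"
    unfolding G_def I_def q_def by (rule distr_compose_treat_at_risk[OF mu sets p])
  also have "distr (distr (measure_pmf ?P) ?PM (\<lambda>x. restrict x I)) (count_space UNIV) H =
      distr (measure_pmf ?P) (count_space UNIV) H"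
    using H by (simp add: distr_distr space_PiM o_def H_def count_at_risk_restrict)
  also have "\<dots> = measure_pmf (nested_binomial_pmf (card {i\<in>I. ennreal t \<le> ennreal (T0 i)}) \<rho> (p * q True / \<rho>))"
    unfolding H_def \<rho>_def by (simp flip: map_pmf_rep_eq add: count_at_risk_Pi_cond_bernoulli[OF I p q])
  finally show ?thesis
    using swap(1) swap(2)[of True]
    by (intro that[of \<rho> "p * q True / \<rho>"])
       (simp_all add: risk_counts_eq_count_at_risk[OF H0] G_def H_def I_def \<rho>_def o_def)
qed

definition centered_risk_product ::
  "real \<Rightarrow> (ennreal \<times> ennreal) measure \<Rightarrow> nat \<Rightarrow> (nat \<Rightarrow> real) \<Rightarrow> (nat \<Rightarrow> real) \<Rightarrow> real
     \<Rightarrow> (nat \<Rightarrow> bool \<times> (ennreal \<times> ennreal)) \<Rightarrow> real" where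
  "centered_risk_product p mu n T1 T0 t \<omega> =
     N1c n T1 T0 t \<omega> * (Nc n T1 T0 t \<omega> - N1c n T1 T0 t \<omega>) -
     cond_exp_disc (cpop_space p mu n)
       (\<lambda>w. N1c n T1 T0 t w * (Nc n T1 T0 t w - N1c n T1 T0 t w)) (Nc n T1 T0 t) \<omega>"

lemma xi1_eq_centered_risk_product:
  "xi1 p mu n T1 T0 t \<omega> =
     Dc n T1 T0 t \<omega> * (Nc n T1 T0 t \<omega> - Dc n T1 T0 t \<omega>) / ((Nc n T1 T0 t \<omega>)\<^sup>2 * (Nc n T1 T0 t \<omega> - 1)) *
     centered_risk_product p mu n T1 T0 t \<omega>"
  by (simp add: xi1_def Let_def centered_risk_product_def)

lemma centered_risk_product_deviation:
  fixes t :: real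
  assumes mu: "prob_space mu" and sets: "sets mu = sets borel" and p: "p \<in> {0..1}"
    and H0: "\<forall>i<n. T1 i = T0 i" and L: "0 \<le> L"
  defines "Bad \<equiv> {\<omega>\<in>space (cpop_space p mu n).
             Nc n T1 T0 t \<omega> * (2 * sqrt (Nc n T1 T0 t \<omega> * L) + 2 * Nc n T1 T0 t \<omega> * exp (-2 * L))
               < \<bar>centered_risk_product p mu n T1 T0 t \<omega>\<bar>}"
  shows "Bad \<in> sets (cpop_space p mu n)" and "measure (cpop_space p mu n) Bad \<le> 2 * exp (-2 * L)"
proof -
  let ?M = "cpop_space p mu n" and ?X = "risk_counts n T1 T0 t"
  obtain \<rho> \<pi> where \<rho>: "\<rho> \<in> {0..1}" and \<pi>: "\<pi> \<in> {0..1}"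
    and distr: "distr ?M (count_space UNIV) ?X =
      measure_pmf (nested_binomial_pmf (card {i\<in>{..<n}. ennreal t \<le> ennreal (T0 i)}) \<rho> \<pi>)"
    using distr_risk_counts[OF mu sets p H0] .
  let ?Q = "nested_binomial_pmf (card {i\<in>{..<n}. ennreal t \<le> ennreal (T0 i)}) \<rho> \<pi>"
  have X: "?X \<in> measurable ?M (count_space UNIV)"
    by (rule measurable_risk_counts[OF sets H0])
  define g where "g y = real (snd y) * (real (fst y) - real (snd y))" for y :: "nat \<times> nat"
  define S where "S = {x. real (fst x) * (2 * sqrt (real (fst x) * L) + 2 * real (fst x) * exp (-2 * L))
      < \<bar>g x - cond_exp_disc (measure_pmf ?Q) g (\<lambda>y. real (fst y)) x\<bar>}"
  have "centered_risk_product p mu n T1 T0 t \<omega> = g (?X \<omega>) - cond_exp_disc (measure_pmf ?Q) g (\<lambda>y. real (fst y)) (?X \<omega>)" for \<omega>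
    using cond_exp_disc_distr[OF X, of g "\<lambda>y. real (fst y)" \<omega>]
    unfolding centered_risk_product_def Nc_eq_risk_counts N1c_eq_risk_counts distr by (simp add: g_def)
  then have Bad: "Bad = ?X -` S \<inter> space ?M"
    by (auto simp: Bad_def S_def Nc_eq_risk_counts)
  show "Bad \<in> sets ?M"
    unfolding Bad using X by (rule measurable_sets) simp
  have "measure ?M Bad = measure_pmf.prob ?Q S"
    unfolding Bad by (simp add: measure_distr[OF X, symmetric] distr)
  also have "\<dots> \<le> 2 * exp (-2 * L)"
    unfolding S_def g_def by (rule nested_binomial_cond_exp_deviation[OF \<rho> \<pi> L])
  finally show "measure ?M Bad \<le> 2 * exp (-2 * L)" .
qed

section \<open>Telescoping over the event times\<close>

lemma length_event_times_le: "length (event_times T n) \<le> n"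
  using card_image_le[of "{..<n}" T] by (simp add: event_times_def)

lemma event_times_nonneg:
  assumes "\<forall>i<n. 0 \<le> T i" and "k < length (event_times T n)"
  shows "0 \<le> event_times T n ! k"
proof -
  have "event_times T n ! k \<in> T ` {..<n}"
    using nth_mem[OF assms(2)] by (simp add: event_times_def)
  then show ?thesis
    using assms(1) by auto
qed

lemma event_times_less:
  assumes "Suc k < length (event_times T n)"
  shows "event_times T n ! k < event_times T n ! Suc k"
  using assms unfolding event_times_def
  by (intro sorted_wrt_nth_less[OF strict_sorted_list_of_set]) auto

lemma Nc_le: "Nc n T1 T0 t \<omega> \<le> real n"
  unfolding Nc_def using card_mono[of "{..<n}" "{i\<in>{..<n}. ennreal t \<le> Wr T1 T0 \<omega> i}"] by auto

lemma Dc_add_Nc_le: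
  assumes "0 \<le> t" "t < t'"
  shows "Dc n T1 T0 t \<omega> + Nc n T1 T0 t' \<omega> \<le> Nc n T1 T0 t \<omega>"
proof -
  define A where "A = {i\<in>{..<n}. Deltar T1 T0 \<omega> i \<and> Wr T1 T0 \<omega> i = ennreal t}"
  define B where "B = {i\<in>{..<n}. ennreal t' \<le> Wr T1 T0 \<omega> i}"
  define C where "C = {i\<in>{..<n}. ennreal t \<le> Wr T1 T0 \<omega> i}"
  have tt': "ennreal t \<le> ennreal t'"
    using assms by (intro ennreal_leI) simp
  have "A \<inter> B = {}"
    using assms unfolding A_def B_def by (auto simp: ennreal_le_iff)
  moreover have "A \<union> B \<subseteq> C"
    unfolding A_def B_def C_def using tt' by (auto dest: order_trans)
  ultimately have "card A + card B \<le> card C"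
    using card_Un_disjoint[of A B] card_mono[of C "A \<union> B"] by (simp add: A_def B_def C_def)
  then show ?thesis
    unfolding Dc_def Nc_def A_def B_def C_def by linarith
qed

text \<open>N = 0 and N = 1 are included: there the left-hand side is 0 because x / 0 = 0.\<close>

lemma abs_xi_factor_le:
  fixes D N b c :: real
  assumes N: "N \<in> \<nat>" and D: "0 \<le> D" "D \<le> N" and b: "\<bar>b\<bar> \<le> c * N * sqrt N"
  shows "\<bar>D * (N - D) / (N\<^sup>2 * (N - 1)) * b\<bar> \<le> 2 * c * D / sqrt N"
proof (cases "N \<le> 1")
  case True
  then have "N = 0 \<or> N = 1"
    using N by (auto elim!: Nats_cases)
  then show ?thesis
    using D b by auto
next
  case False
  then have N2: "2 \<le> N"
    using N by (auto elim!: Nats_cases)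
  have factor: "0 \<le> D * (N - D) / (N\<^sup>2 * (N - 1))"
    using D N2 by auto
  have "0 \<le> c * (N * sqrt N)"
    using b by (metis abs_ge_zero order_trans mult.assoc)
  moreover have "0 < N * sqrt N"
    using N2 by simp
  ultimately have c: "0 \<le> c"
    by (simp add: zero_le_mult_iff)
  have "\<bar>D * (N - D) / (N\<^sup>2 * (N - 1)) * b\<bar> \<le> D * N / (N\<^sup>2 * (N - 1)) * (c * N * sqrt N)"
    unfolding abs_mult abs_of_nonneg[OF factor] using D N2 b
    by (intro mult_mono divide_right_mono) auto
  also have "\<dots> = c * D * sqrt N / (N - 1)"
    using N2 by (simp add: power2_eq_square field_simps)
  also have "\<dots> \<le> c * D * sqrt N / (N / 2)"
    using N2 D c by (intro divide_left_mono mult_nonneg_nonneg) auto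
  also have "\<dots> = 2 * c * D * (sqrt N / N)"
    by simp
  also have "\<dots> = 2 * c * D / sqrt N"
    using N2 sqrt_divide_self_eq[of N] by (simp add: divide_inverse)
  finally show ?thesis .
qed

lemma diff_div_sqrt_le:
  fixes a b :: real
  assumes "0 \<le> b" "b \<le> a"
  shows "(a - b) / sqrt a \<le> 2 * (sqrt a - sqrt b)"
proof (cases "a = 0")
  case False
  have "a - b = (sqrt a - sqrt b) * (sqrt a + sqrt b)"
    using assms by (simp add: algebra_simps)
  also have "\<dots> \<le> (sqrt a - sqrt b) * (2 * sqrt a)"
    using assms by (intro mult_left_mono) auto
  finally show ?thesis
    using False assms by (simp add: divide_le_eq mult_ac)
qed (use assms in simp)

lemma sum_div_sqrt_le:
  fixes a D :: "nat \<Rightarrow> real"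
  assumes D: "\<And>k. k < K \<Longrightarrow> 0 \<le> D k \<and> D k \<le> a k - a (Suc k)" and a: "\<And>k. k \<le> K \<Longrightarrow> 0 \<le> a k"
  shows "(\<Sum>k<K. D k / sqrt (a k)) \<le> 2 * sqrt (a 0)"
proof -
  have "(\<Sum>k<K. D k / sqrt (a k)) \<le> (\<Sum>k<K. 2 * (sqrt (a k) - sqrt (a (Suc k))))"
  proof (intro sum_mono)
    fix k assume "k \<in> {..<K}"
    then have "0 \<le> D k" "D k \<le> a k - a (Suc k)" "0 \<le> a (Suc k)"
      using D a by auto
    then show "D k / sqrt (a k) \<le> 2 * (sqrt (a k) - sqrt (a (Suc k)))"
      by (intro order_trans[OF divide_right_mono diff_div_sqrt_le]) auto
  qed
  also have "\<dots> = 2 * (sqrt (a 0) - sqrt (a K))"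
    using sum_lessThan_telescope'[of "\<lambda>k. 2 * sqrt (a k)" K] by (simp add: right_diff_distrib)
  also have "\<dots> \<le> 2 * sqrt (a 0)"
    using a[of K] by simp
  finally show ?thesis .
qed

lemma abs_sum_xi1_le:
  assumes nonneg: "\<forall>i<n. 0 \<le> T0 i" and c: "0 \<le> c"
    and bound: "\<And>k. k < length (event_times T0 n) - 1 \<Longrightarrow>
      \<bar>centered_risk_product p mu n T1 T0 (event_times T0 n ! k) \<omega>\<bar>
        \<le> c * Nc n T1 T0 (event_times T0 n ! k) \<omega> * sqrt (Nc n T1 T0 (event_times T0 n ! k) \<omega>)"
  shows "\<bar>\<Sum>k < length (event_times T0 n) - 1. xi1 p mu n T1 T0 (event_times T0 n ! k) \<omega>\<bar> \<le> 4 * c * sqrt n"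
proof -
  define ts where "ts = event_times T0 n"
  define K where "K = length ts - 1"
  define a where "a k = Nc n T1 T0 (ts ! k) \<omega>" for k
  define D where "D k = Dc n T1 T0 (ts ! k) \<omega>" for k
  have D_le: "0 \<le> D k \<and> D k \<le> a k - a (Suc k)" if "k < K" for k
  proof -
    have "0 \<le> ts ! k" "ts ! k < ts ! Suc k"
      using that event_times_nonneg[OF nonneg] event_times_less by (auto simp: ts_def K_def)
    from Dc_add_Nc_le[OF this, of n T1 T0 \<omega>] show ?thesis
      by (auto simp: D_def a_def Dc_def Nc_def)
  qed
  have a_nonneg: "0 \<le> a k" for k
    by (simp add: a_def Nc_def)
  have "\<bar>xi1 p mu n T1 T0 (ts ! k) \<omega>\<bar> \<le> 2 * c * D k / sqrt (a k)" if "k < K" for k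
    unfolding xi1_eq_centered_risk_product a_def D_def
  proof (rule abs_xi_factor_le)
    show "Nc n T1 T0 (ts ! k) \<omega> \<in> \<nat>"
      by (simp add: Nc_def)
    show "0 \<le> Dc n T1 T0 (ts ! k) \<omega>" "Dc n T1 T0 (ts ! k) \<omega> \<le> Nc n T1 T0 (ts ! k) \<omega>"
      using D_le[OF that] a_nonneg[of "Suc k"] by (auto simp: a_def D_def)
    show "\<bar>centered_risk_product p mu n T1 T0 (ts ! k) \<omega>\<bar>
        \<le> c * Nc n T1 T0 (ts ! k) \<omega> * sqrt (Nc n T1 T0 (ts ! k) \<omega>)"
      using bound that by (simp add: K_def ts_def)
  qed
  then have "\<bar>\<Sum>k<K. xi1 p mu n T1 T0 (ts ! k) \<omega>\<bar> \<le> (\<Sum>k<K. 2 * c * D k / sqrt (a k))"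
    by (intro order_trans[OF sum_abs] sum_mono) simp
  also have "\<dots> = 2 * c * (\<Sum>k<K. D k / sqrt (a k))"
    by (simp add: sum_distrib_left)
  also have "\<dots> \<le> 2 * c * (2 * sqrt (a 0))"
    using D_le a_nonneg c by (intro mult_left_mono sum_div_sqrt_le) auto
  also have "\<dots> \<le> 4 * c * sqrt n"
    using c Nc_le[of n T1 T0 "ts ! 0" \<omega>] by (simp add: a_def mult_left_mono)
  finally show ?thesis
    by (simp add: K_def ts_def)
qed

section \<open>The tail bound\<close>

lemma exp_minus_two_ln:
  fixes x :: real
  shows "0 < x \<Longrightarrow> exp (-2 * ln x) = 1 / x\<^sup>2"
proof -
  assume "0 < x"
  then have "-2 * ln x = - ln (x\<^sup>2)"
    by (simp add: ln_realpow)
  then show ?thesis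
    using \<open>0 < x\<close> by (simp add: exp_minus divide_inverse)
qed

lemma deviation_bound_at_ln:
  fixes m n :: nat and b :: real
  assumes n: "3 \<le> n" and m: "m \<le> n"
    and b: "\<bar>b\<bar> \<le> m * (2 * sqrt (m * ln n) + 2 * m * exp (-2 * ln n))"
  shows "\<bar>b\<bar> \<le> 3 * sqrt (ln n) * m * sqrt m"
proof (cases "m = 0")
  case False
  have "1 \<le> ln (real n)"
    using n exp_le by (subst ln_ge_iff) auto
  then have "1 * 1 \<le> real m * ln n"
    using False by (intro mult_mono) auto
  then have sqrt_ge_1: "1 \<le> sqrt (m * ln n)"
    by simp
  have "2 * m * exp (-2 * ln n) = 2 * m / real n ^ 2"
    using n exp_minus_two_ln[of "real n"] by simp
  also have "\<dots> \<le> 2 * n / real n ^ 2"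
    using m by (intro divide_right_mono) auto
  also have "\<dots> = 2 / n"
    by (simp add: power2_eq_square)
  also have "\<dots> \<le> 1"
    using n by simp
  finally have "\<bar>b\<bar> \<le> m * (3 * sqrt (m * ln n))"
    using b sqrt_ge_1 by (smt (verit) mult_left_mono of_nat_0_le_iff)
  then show ?thesis
    by (simp add: real_sqrt_mult mult_ac)
qed (use b in simp)

lemma abs_sum_xi1_le_outside_deviation:
  assumes nonneg: "\<forall>i<n. 0 \<le> T0 i" and n: "3 \<le> n"
    and within: "\<And>k. k < length (event_times T0 n) - 1 \<Longrightarrow>
      \<bar>centered_risk_product p mu n T1 T0 (event_times T0 n ! k) \<omega>\<bar>
        \<le> Nc n T1 T0 (event_times T0 n ! k) \<omega> *
           (2 * sqrt (Nc n T1 T0 (event_times T0 n ! k) \<omega> * ln n) +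
            2 * Nc n T1 T0 (event_times T0 n ! k) \<omega> * exp (-2 * ln n))"
  shows "\<bar>\<Sum>k < length (event_times T0 n) - 1. xi1 p mu n T1 T0 (event_times T0 n ! k) \<omega>\<bar>
           \<le> 12 * sqrt (real n * ln (real n))"
proof -
  have "\<bar>centered_risk_product p mu n T1 T0 (event_times T0 n ! k) \<omega>\<bar>
      \<le> 3 * sqrt (ln n) * Nc n T1 T0 (event_times T0 n ! k) \<omega> * sqrt (Nc n T1 T0 (event_times T0 n ! k) \<omega>)"
    if k: "k < length (event_times T0 n) - 1" for k
  proof -
    obtain m where m: "Nc n T1 T0 (event_times T0 n ! k) \<omega> = real m"
      by (simp add: Nc_def)
    have "m \<le> n"
      using Nc_le[of n T1 T0 "event_times T0 n ! k" \<omega>] by (simp add: m)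
    then show ?thesis
      using within[OF k] unfolding m by (intro deviation_bound_at_ln[OF n]) auto
  qed
  then have "\<bar>\<Sum>k < length (event_times T0 n) - 1. xi1 p mu n T1 T0 (event_times T0 n ! k) \<omega>\<bar>
      \<le> 4 * (3 * sqrt (ln n)) * sqrt n"
    using n by (intro abs_sum_xi1_le[OF nonneg]) auto
  then show ?thesis
    by (simp add: real_sqrt_mult mult_ac)
qed

lemma sum_xi1_tail_bound:
  assumes mu: "prob_space mu" and sets: "sets mu = sets borel" and p: "p \<in> {0..1}"
    and nonneg: "\<forall>i<n. 0 \<le> T0 i" and H0: "\<forall>i<n. T1 i = T0 i" and n: "3 \<le> n"
  shows "measure (cpop_space p mu n)
           {\<omega> \<in> space (cpop_space p mu n).
              \<bar>\<Sum>k < length (event_times T0 n) - 1. xi1 p mu n T1 T0 (event_times T0 n ! k) \<omega>\<bar>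
                > 12 * sqrt (real n * ln (real n))} \<le> 2 / real n"
    (is "measure ?M ?tail \<le> _")
proof -
  define ts where "ts = event_times T0 n"
  define K where "K = length ts - 1"
  define L where "L = ln (real n)"
  define Bad where "Bad k = {\<omega>\<in>space ?M.
      Nc n T1 T0 (ts ! k) \<omega> * (2 * sqrt (Nc n T1 T0 (ts ! k) \<omega> * L) + 2 * Nc n T1 T0 (ts ! k) \<omega> * exp (-2 * L))
        < \<bar>centered_risk_product p mu n T1 T0 (ts ! k) \<omega>\<bar>}" for k
  interpret prob_space ?M
    unfolding cpop_space_def by (intro prob_space_PiM prob_space_pair measure_pmf.prob_space_axioms mu)
  have L: "0 \<le> L"
    using n by (simp add: L_def)
  have "2 * exp (-2 * L) = 2 / (real n)\<^sup>2"
    using n exp_minus_two_ln[of "real n"] by (simp add: L_def)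
  note deviation = centered_risk_product_deviation[OF mu sets p H0 L, unfolded this]
  have Bad: "Bad k \<in> sets ?M" "measure ?M (Bad k) \<le> 2 / (real n)\<^sup>2" for k
    unfolding Bad_def by (fact deviation)+
  have "?tail \<subseteq> (\<Union>k<K. Bad k)"
  proof
    fix \<omega> assume \<omega>: "\<omega> \<in> ?tail"
    show "\<omega> \<in> (\<Union>k<K. Bad k)"
    proof (rule ccontr)
      assume "\<omega> \<notin> (\<Union>k<K. Bad k)"
      then have "\<bar>centered_risk_product p mu n T1 T0 (ts ! k) \<omega>\<bar>
          \<le> Nc n T1 T0 (ts ! k) \<omega> * (2 * sqrt (Nc n T1 T0 (ts ! k) \<omega> * L) + 2 * Nc n T1 T0 (ts ! k) \<omega> * exp (-2 * L))"
        if "k < K" for k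
        using \<omega> that by (auto simp: Bad_def not_less)
      then have "\<bar>\<Sum>k<K. xi1 p mu n T1 T0 (ts ! k) \<omega>\<bar> \<le> 12 * sqrt (real n * ln (real n))"
        unfolding K_def ts_def L_def by (rule abs_sum_xi1_le_outside_deviation[OF nonneg n])
      then show False
        using \<omega> by (simp add: K_def ts_def)
    qed
  qed
  then have "measure ?M ?tail \<le> measure ?M (\<Union>k<K. Bad k)"
    using Bad(1) by (intro finite_measure_mono) auto
  also have "\<dots> \<le> (\<Sum>k<K. measure ?M (Bad k))"
    using Bad(1) by (intro finite_measure_subadditive_finite) auto
  also have "\<dots> \<le> real K * (2 / (real n)\<^sup>2)"
    using sum_mono[of "{..<K}" "\<lambda>k. measure ?M (Bad k)" "\<lambda>_. 2 / (real n)\<^sup>2"] Bad(2) by simp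
  also have "\<dots> \<le> real n * (2 / (real n)\<^sup>2)"
    using length_event_times_le[of T0 n] by (intro mult_right_mono) (auto simp: K_def ts_def)
  also have "\<dots> = 2 / real n"
    by (simp add: power2_eq_square)
  finally show ?thesis .
qed

lemma eventually_sum_xi1_tail_le:
  assumes p: "p \<in> {0..1}" and mu: "\<forall>n. prob_space (mu n)" and sets: "\<forall>n. sets (mu n) = sets borel"
    and nonneg: "\<forall>n i. i < n \<longrightarrow> 0 \<le> T0 n i" and H0: "\<forall>n i. i < n \<longrightarrow> T1 n i = T0 n i"
    and \<epsilon>: "0 < \<epsilon>"
  shows "\<forall>\<^sub>F n in sequentially.
           measure (cpop_space p (mu n) n)
             {\<omega> \<in> space (cpop_space p (mu n) n).
                \<bar>\<Sum>k < length (event_times (T0 n) n) - 1.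
                    xi1 p (mu n) n (T1 n) (T0 n) (event_times (T0 n) n ! k) \<omega>\<bar>
                > 12 * sqrt (real n * ln (real n))} \<le> \<epsilon>"
proof -
  have "\<forall>\<^sub>F n in sequentially. 3 \<le> n \<and> 2 / real n < \<epsilon>"
    by (intro eventually_conj eventually_ge_at_top order_tendstoD(2)[OF lim_const_over_n \<epsilon>])
  then show ?thesis
  proof (rule eventually_mono)
    fix n :: nat
    assume n: "3 \<le> n \<and> 2 / real n < \<epsilon>"
    have "\<forall>i<n. 0 \<le> T0 n i" "\<forall>i<n. T1 n i = T0 n i"
      using nonneg H0 by auto
    from sum_xi1_tail_bound[OF mu[rule_format, of n] sets[rule_format, of n] p this conjunct1[OF n]] n
    show "measure (cpop_space p (mu n) n)
             {\<omega> \<in> space (cpop_space p (mu n) n).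
                \<bar>\<Sum>k < length (event_times (T0 n) n) - 1.
                    xi1 p (mu n) n (T1 n) (T0 n) (event_times (T0 n) n ! k) \<omega>\<bar>
                > 12 * sqrt (real n * ln (real n))} \<le> \<epsilon>"
      by linarith
  qed
qed

theorem lemmaA8:
  fixes p :: real
    and mu :: "nat \<Rightarrow> (ennreal \<times> ennreal) measure"
    and T1 T0 :: "nat \<Rightarrow> nat \<Rightarrow> real"
  assumes "0 < p" and "p < 1"
    and "\<forall>n. prob_space (mu n)"
    and "\<forall>n. sets (mu n) = sets borel"
    and "\<forall>n i. i < n \<longrightarrow> 0 \<le> T1 n i \<and> 0 \<le> T0 n i"
    and H0: "\<forall>n i. i < n \<longrightarrow> T1 n i = T0 n i"
  shows "\<forall>\<epsilon>>0. \<exists>B. \<forall>\<^sub>F n in sequentially.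
           measure (cpop_space p (mu n) n)
             {\<omega> \<in> space (cpop_space p (mu n) n).
                \<bar>\<Sum>k < length (event_times (T0 n) n) - 1.
                    xi1 p (mu n) n (T1 n) (T0 n) (event_times (T0 n) n ! k) \<omega>\<bar>
                > B * sqrt (real n * ln (real n))} \<le> \<epsilon>"
proof -
  have p: "p \<in> {0..1}" and nonneg: "\<forall>n i. i < n \<longrightarrow> 0 \<le> T0 n i"
    using assms(1,2,5) by auto
  show ?thesis
    by (intro allI impI exI[where x = 12] eventually_sum_xi1_tail_le[OF p assms(3,4) nonneg H0])
qed

end
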